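(* Suppose Assumptions A.1, A.2 and A.3 (stated in the context) hold. Then the constraint matrix of the linear recourse polyhedron $P$ is totally unimodular. Every entry of this matrix lies in $\{0,\pm1\}$, and every determinant of one of its square submatrices lies in $\{0,\pm1\}$.
   Context: Fix $d \ge 1$. The decision variables are $\mathbf{x}=(x_1,\dots,x_d)$, representing an individual, and $\mathbf{a}=(a_1,\dots,a_d)$, representing an action, with $(\mathbf{x},\mathbf{a})\in\mathbb{R}^{2d}$. For a feature index $j\in[d]$, a *feature term* $v_j$ denotes one of $x_j$, $a_j$ or $x_j+a_j$. The choice may differ from constraint to constraint. A *linear recourse constraint* is a linear inequality of one of the following three types. (i) An *integer bound constraint* $L_j\le v_j$ or $v_j\le U_j$, where $L_j,U_j\in\mathbb{Z}$. (ii) A *$K$-hot constraint* $\sum_{j\in J_i} s_{ij}\, v_j\le K_i$, where $J_i\subseteq[d]$, each $s_{ij}\in\{+1,-1\}$, and $K_i\in\mathbb{Z}$. (iii) A *(unit) directional linkage constraint* $v_j\le v_k$, where $j,k\in[d]$. The feature space $\mathcal{X}$, the region of interest $\mathcal{R}$, the box $B(\mathbf{u},\mathbf{l})=\{\mathbf{x}:\mathbf{l}\le\mathbf{x}\le\mathbf{u}\}$ with $\mathbf{u},\mathbf{l}\in\mathbb{Z}^d$, and the action set $A(\mathbf{x})$ are all assumed to be described by finitely many linear recourse constraints. The *linear recourse polyhedron* $P\subseteq\mathbb{R}^{2d}$ is the set of all $(\mathbf{x},\mathbf{a})$ satisfying all of these constraints, namely $\mathbf{x}+\mathbf{a}\in\mathcal{X}$,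 $\mathbf{x}\in\mathcal{R}$, $\mathbf{x}\in B(\mathbf{u},\mathbf{l})$ and $\mathbf{a}\in A(\mathbf{x})$. Let $\mathcal{J}=\{J_i\}$ be the family of index sets of the $K$-hot constraints. The *implication graph* is the undirected graph with one node $n_j$ for each $j\in[d]$ and an edge between $n_j$ and $n_k$ whenever some directional linkage constraint acts on features $j$ and $k$. Assumption A.1: no feature index appears in more than one $K$-hot constraint, i.e. $J_i\cap J_k=\emptyset$ for all distinct $J_i,J_k\in\mathcal{J}$. Assumption A.2: each connected component of the implication graph contains at most one node $n_j$ with $j\in\bigcup_{J_i\in\mathcal{J}}J_i$. Assumption A.3: the implication graph is acyclic. *)

theory Defs
  imports "Jordan_Normal_Form.DL_Submatrix" "Jordan_Normal_Form.Determinant"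
begin

text \<open>Features are indexed by 0, ..., d-1 (this is the index set [d]).
  The 2d decision variables (x, a) are the columns 0, ..., 2d-1 of the constraint
  matrix: column j is x_j and column d+j is a_j.\<close>

text \<open>Choice of a feature term v_j: x_j, a_j or x_j + a_j.\<close>
datatype term_kind = TX | TA | TXA

datatype recourse_constr =
    LowerBound nat term_kind int
      \<comment> \<open>LowerBound j t L :  L <= v_j  (v_j of kind t)\<close>
  | UpperBound nat term_kind int
      \<comment> \<open>UpperBound j t U :  v_j <= U\<close>
  | KHot "nat set" "nat \<Rightarrow> int" "nat \<Rightarrow> term_kind" int
      \<comment> \<open>KHot J s t K :  sum over j in J of s j * v_j <= K, v_j of kind t j\<close>
  | Link nat term_kind nat term_kind
      \<comment> \<open>Link j tj k tk :  v_j <= v_k, v_j of kind tj and v_k of kind tk\<close>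

definition term_coef :: "nat \<Rightarrow> nat \<Rightarrow> term_kind \<Rightarrow> nat \<Rightarrow> int" where
  "term_coef d j t c =
     (if c = j \<and> t \<noteq> TA then 1 else 0) + (if c = d + j \<and> t \<noteq> TX then 1 else 0)"

text \<open>Coefficient row of a constraint, written in the form  row * (x,a) <= rhs.\<close>
fun constr_row :: "nat \<Rightarrow> recourse_constr \<Rightarrow> nat \<Rightarrow> int" where
  "constr_row d (LowerBound j t L) c = - term_coef d j t c"
| "constr_row d (UpperBound j t U) c = term_coef d j t c"
| "constr_row d (KHot J s t K) c = (\<Sum>j\<in>J. s j * term_coef d j (t j) c)"
| "constr_row d (Link j tj k tk) c = term_coef d j tj c - term_coef d k tk c"

fun constr_rhs :: "recourse_constr \<Rightarrow> int" where
  "constr_rhs (LowerBound j t L) = - L"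
| "constr_rhs (UpperBound j t U) = U"
| "constr_rhs (KHot J s t K) = K"
| "constr_rhs (Link j tj k tk) = 0"

fun wf_constr :: "nat \<Rightarrow> recourse_constr \<Rightarrow> bool" where
  "wf_constr d (LowerBound j t L) = (j < d)"
| "wf_constr d (UpperBound j t U) = (j < d)"
| "wf_constr d (KHot J s t K) = (J \<subseteq> {..<d} \<and> (\<forall>j\<in>J. s j \<in> {1, -1}))"
| "wf_constr d (Link j tj k tk) = (j < d \<and> k < d)"

text \<open>The linear recourse polyhedron described by a finite list of constraints
  (the concatenation of the descriptions of X (applied to x+a), R, B(u,l) and A(x)).
  A point (x,a) is given by its 2d coordinates z, with x_j = z j, a_j = z (d+j).\<close>
definition recourse_polyhedron :: "nat \<Rightarrow> recourse_constr list \<Rightarrow> (nat \<Rightarrow> real) set" where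
  "recourse_polyhedron d cs =
     {z. (\<forall>c\<ge>2*d. z c = 0) \<and>
         (\<forall>con\<in>set cs. (\<Sum>c<2*d. of_int (constr_row d con c) * z c) \<le> of_int (constr_rhs con))}"

definition constraint_matrix :: "nat \<Rightarrow> recourse_constr list \<Rightarrow> int mat" where
  "constraint_matrix d cs = mat (length cs) (2*d) (\<lambda>(i,c). constr_row d (cs ! i) c)"

definition totally_unimodular :: "int mat \<Rightarrow> bool" where
  "totally_unimodular A \<longleftrightarrow>
     (\<forall>I J. dim_row (submatrix A I J) = dim_col (submatrix A I J) \<longrightarrow>
            det (submatrix A I J) \<in> {-1, 0, 1})"

definition khot_indices :: "recourse_constr list \<Rightarrow> nat set" where
  "khot_indices cs = (\<Union>con\<in>set cs. case con of KHot J s t K \<Rightarrow> J | _ \<Rightarrow> {})"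

definition assumption_A1 :: "recourse_constr list \<Rightarrow> bool" where
  "assumption_A1 cs \<longleftrightarrow>
     (\<forall>p<length cs. \<forall>q<length cs. p \<noteq> q \<longrightarrow>
        (case (cs ! p, cs ! q) of
           (KHot J1 s1 t1 K1, KHot J2 s2 t2 K2) \<Rightarrow> J1 \<inter> J2 = {}
         | _ \<Rightarrow> True))"

text \<open>Constraint number p is a directional linkage constraint acting on features j and k
  (an edge of the implication graph between n_j and n_k; one edge per linkage constraint).\<close>
definition link_edge :: "recourse_constr list \<Rightarrow> nat \<Rightarrow> nat \<Rightarrow> nat \<Rightarrow> bool" where
  "link_edge cs p j k \<longleftrightarrow> p < length cs \<and>
     (\<exists>tj tk. cs ! p = Link j tj k tk \<or> cs ! p = Link k tk j tj)"

definition impl_adj :: "recourse_constr list \<Rightarrow> nat \<Rightarrow> nat \<Rightarrow> bool" where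
  "impl_adj cs j k \<longleftrightarrow> (\<exists>p. link_edge cs p j k)"

definition impl_connected :: "recourse_constr list \<Rightarrow> nat \<Rightarrow> nat \<Rightarrow> bool" where
  "impl_connected cs = (impl_adj cs)\<^sup>*\<^sup>*"

definition assumption_A2 :: "recourse_constr list \<Rightarrow> bool" where
  "assumption_A2 cs \<longleftrightarrow>
     (\<forall>j\<in>khot_indices cs. \<forall>k\<in>khot_indices cs. impl_connected cs j k \<longrightarrow> j = k)"

text \<open>A cycle in the implication graph: a nonempty list of pairwise distinct edges es
  and vertices vs = [v_0, ..., v_m] with edge es!i joining v_i and v_(i+1),
  v_m = v_0 and v_0, ..., v_(m-1) pairwise distinct (loops and parallel edges are cycles).\<close>
definition impl_cycle :: "recourse_constr list \<Rightarrow> nat list \<Rightarrow> nat list \<Rightarrow> bool" where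
  "impl_cycle cs es vs \<longleftrightarrow>
     es \<noteq> [] \<and> distinct es \<and> length vs = length es + 1 \<and>
     (\<forall>i<length es. link_edge cs (es ! i) (vs ! i) (vs ! Suc i)) \<and>
     hd vs = last vs \<and> distinct (tl vs)"

definition assumption_A3 :: "recourse_constr list \<Rightarrow> bool" where
  "assumption_A3 cs \<longleftrightarrow> \<not> (\<exists>es vs. impl_cycle cs es vs)"

end

(*
  Scale the column of every a_j by a suitable sign. Then each row of the constraint matrix
  becomes the difference of the indicator vectors of two root paths in one rooted forest on
  the columns, so the matrix is a network matrix and hence totally unimodular.

  The forest: by A.3 the implication graph is a forest; root each tree at its K-hot feature
  (unique by A.2) and orient every linkage edge towards the root. The K-hot features of one
  sign class of a K-hot constraint (disjoint from all others by A.1) are chained below one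
  another in index order. Each feature contributes its two columns x_j, a_j, arranged in
  three levels so that each of x_j, a_j, x_j + a_j is the difference of two levels. A bound
  row is then a difference of two levels of one feature, a linkage row a difference of
  levels of its two endpoints (the shared part cancels), and a K-hot row telescopes along
  the chains of its two sign classes.

  Total unimodularity of such matrices goes by induction on the size: in a column of
  maximal depth, all root paths through it coincide, so row operations with a pivot row
  clear the column without leaving the class, and Laplace expansion along it reduces the
  size.
*)
theory Submission
  imports Defs
begin

section \<open>Indicator difference matrices over coherent families\<close>

definition indicator_diff_mat ::
  "nat \<Rightarrow> nat \<Rightarrow> (nat \<Rightarrow> int) \<Rightarrow> (nat \<Rightarrow> nat set) \<Rightarrow> (nat \<Rightarrow> nat set) \<Rightarrow> int mat" where
  "indicator_diff_mat m n \<sigma> U W =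
     mat m n (\<lambda>(r, c). \<sigma> c * (of_bool (c \<in> U r) - of_bool (c \<in> W r)))"

text \<open>Think of the members of F as root paths of a rooted tree on the columns, and of h as
  depth: two members passing through a column e agree on everything not deeper than e.
  The rows of an indicator difference matrix over such a family are then (column-signed)
  tree paths, as in a network matrix.\<close>
definition coherent_family :: "nat \<Rightarrow> (nat \<Rightarrow> nat) \<Rightarrow> nat set set \<Rightarrow> bool" where
  "coherent_family n h F \<longleftrightarrow>
     (\<forall>A\<in>F. \<forall>B\<in>F. \<forall>e<n. e \<in> A \<longrightarrow> e \<in> B \<longrightarrow> (\<forall>c<n. h c \<le> h e \<longrightarrow> (c \<in> A \<longleftrightarrow> c \<in> B)))"

lemma indicator_diff_mat_carrier: "indicator_diff_mat m n \<sigma> U W \<in> carrier_mat m n"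
  by (simp add: indicator_diff_mat_def)

lemma indicator_diff_mat_index [simp]:
  "r < m \<Longrightarrow> c < n \<Longrightarrow>
   indicator_diff_mat m n \<sigma> U W $$ (r, c) = \<sigma> c * (of_bool (c \<in> U r) - of_bool (c \<in> W r))"
  by (simp add: indicator_diff_mat_def)

lemma indicator_diff_mat_entry_range:
  "\<sigma> c \<in> {-1, 1} \<Longrightarrow> r < m \<Longrightarrow> c < n \<Longrightarrow> indicator_diff_mat m n \<sigma> U W $$ (r, c) \<in> {-1, 0, 1}"
  by auto

lemma indicator_diff_mat_reindex:
  assumes "\<And>i. i < m' \<Longrightarrow> f i < m" and "\<And>j. j < n' \<Longrightarrow> g j < n"
  shows "mat m' n' (\<lambda>(i, j). indicator_diff_mat m n \<sigma> U W $$ (f i, g j)) =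
    indicator_diff_mat m' n' (\<sigma> \<circ> g) (\<lambda>i. g -` U (f i)) (\<lambda>i. g -` W (f i))"
  by (rule eq_matI) (simp_all add: assms indicator_diff_mat_def)

lemma coherent_family_vimage:
  assumes "coherent_family n h F" and "\<And>c. c < n' \<Longrightarrow> g c < n"
  shows "coherent_family n' (h \<circ> g) ((\<lambda>A. g -` A) ` F)"
  using assms unfolding coherent_family_def by simp blast

lemma det_indicator_diff_mat_negate_row:
  assumes "r < k"
  shows "det (indicator_diff_mat k k \<sigma> (U(r := W r)) (W(r := U r))) =
    - det (indicator_diff_mat k k \<sigma> U W)"
proof -
  have "indicator_diff_mat k k \<sigma> (U(r := W r)) (W(r := U r)) =
      multrow r (-1) (indicator_diff_mat k k \<sigma> U W)"
    by (rule eq_matI) (auto simp: indicator_diff_mat_def mat_multrow_def)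
  then show ?thesis
    using det_multrow[OF assms indicator_diff_mat_carrier] by simp
qed

lemma det_indicator_diff_mat_subtract_row:
  assumes "r < k" "r0 < k" "r \<noteq> r0" and "\<And>c. c < k \<Longrightarrow> c \<in> U r \<longleftrightarrow> c \<in> U r0"
  shows "det (indicator_diff_mat k k \<sigma> (U(r := W r0)) W) = det (indicator_diff_mat k k \<sigma> U W)"
proof -
  have "indicator_diff_mat k k \<sigma> (U(r := W r0)) W = addrow (-1) r r0 (indicator_diff_mat k k \<sigma> U W)"
    by (rule eq_matI) (use assms in \<open>auto simp: indicator_diff_mat_def mat_addrow_def algebra_simps\<close>)
  then show ?thesis
    using det_addrow[OF assms(2,3) indicator_diff_mat_carrier] by simp
qed

lemma det_indicator_diff_mat_add_row:
  assumes "r < k" "r0 < k" "r \<noteq> r0" and "\<And>c. c < k \<Longrightarrow> c \<in> W r \<longleftrightarrow> c \<in> U r0"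
  shows "det (indicator_diff_mat k k \<sigma> U (W(r := W r0))) = det (indicator_diff_mat k k \<sigma> U W)"
proof -
  have "indicator_diff_mat k k \<sigma> U (W(r := W r0)) = addrow 1 r r0 (indicator_diff_mat k k \<sigma> U W)"
    by (rule eq_matI) (use assms in \<open>auto simp: indicator_diff_mat_def mat_addrow_def algebra_simps\<close>)
  then show ?thesis
    using det_addrow[OF assms(2,3) indicator_diff_mat_carrier] by simp
qed

lemma det_eq_cofactor_if_column_single_nonzero:
  fixes A :: "'a :: comm_ring_1 mat"
  assumes "A \<in> carrier_mat n n" "r0 < n" "e < n" and "\<And>r. r < n \<Longrightarrow> r \<noteq> r0 \<Longrightarrow> A $$ (r, e) = 0"
  shows "det A = A $$ (r0, e) * cofactor A r0 e"
proof -
  have "det A = (\<Sum>r<n. A $$ (r, e) * cofactor A r e)"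
    by (rule laplace_expansion_column[OF assms(1,3)])
  also have "\<dots> = (\<Sum>r\<in>{r0}. A $$ (r, e) * cofactor A r e)"
    by (rule sum.mono_neutral_right) (use assms in auto)
  finally show ?thesis by simp
qed

text \<open>All members of F through e coincide, so adding or subtracting the pivot row r0
  replaces the member through e in row r by W r0: the matrix stays an indicator difference
  matrix over F.\<close>
lemma indicator_diff_mat_clear_entry:
  assumes "r0 < k" "r < k" "r \<noteq> r0" "e \<in> U r0" "e \<notin> W r0" "\<forall>r<k. U r \<in> F \<and> W r \<in> F"
    and agree: "\<And>A B c. A \<in> F \<Longrightarrow> B \<in> F \<Longrightarrow> e \<in> A \<Longrightarrow> e \<in> B \<Longrightarrow> c < k \<Longrightarrow> c \<in> A \<longleftrightarrow> c \<in> B"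
  obtains U' W' where "\<forall>r<k. U' r \<in> F \<and> W' r \<in> F" "e \<in> U' r \<longleftrightarrow> e \<in> W' r"
    "\<forall>r'. r' \<noteq> r \<longrightarrow> U' r' = U r' \<and> W' r' = W r'"
    "det (indicator_diff_mat k k \<sigma> U' W') = det (indicator_diff_mat k k \<sigma> U W)"
proof -
  consider "e \<in> U r \<longleftrightarrow> e \<in> W r" | "e \<in> U r" "e \<notin> W r" | "e \<notin> U r" "e \<in> W r"
    by blast
  then show ?thesis
  proof cases
    case 1
    show ?thesis
      by (rule that[of U W]) (use 1 assms(6) in simp_all)
  next
    case 2
    have "c \<in> U r \<longleftrightarrow> c \<in> U r0" if "c < k" for c
      using agree[OF _ _ 2(1) assms(4) that] assms(1,2,6) by blast
    then have "det (indicator_diff_mat k k \<sigma> (U(r := W r0)) W) = det (indicator_diff_mat k k \<sigma> U W)"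
      by (rule det_indicator_diff_mat_subtract_row[OF assms(2,1,3)])
    moreover have "\<forall>r'<k. (U(r := W r0)) r' \<in> F \<and> W r' \<in> F"
      using assms(1,6) by auto
    ultimately show ?thesis
      using that[of "U(r := W r0)" W] 2 assms(5) by simp
  next
    case 3
    have "c \<in> W r \<longleftrightarrow> c \<in> U r0" if "c < k" for c
      using agree[OF _ _ 3(2) assms(4) that] assms(1,2,6) by blast
    then have "det (indicator_diff_mat k k \<sigma> U (W(r := W r0))) = det (indicator_diff_mat k k \<sigma> U W)"
      by (rule det_indicator_diff_mat_add_row[OF assms(2,1,3)])
    moreover have "\<forall>r'<k. U r' \<in> F \<and> (W(r := W r0)) r' \<in> F"
      using assms(1,6) by auto
    ultimately show ?thesis
      using that[of U "W(r := W r0)"] 3 assms(5) by simp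
  qed
qed

lemma indicator_diff_mat_clear_column:
  assumes "r0 < k" "e \<in> U r0" "e \<notin> W r0" "\<forall>r<k. U r \<in> F \<and> W r \<in> F"
    and agree: "\<And>A B c. A \<in> F \<Longrightarrow> B \<in> F \<Longrightarrow> e \<in> A \<Longrightarrow> e \<in> B \<Longrightarrow> c < k \<Longrightarrow> c \<in> A \<longleftrightarrow> c \<in> B"
  obtains U' W' where "\<forall>r<k. U' r \<in> F \<and> W' r \<in> F" "e \<in> U' r0" "e \<notin> W' r0"
    "\<forall>r<k. r \<noteq> r0 \<longrightarrow> (e \<in> U' r \<longleftrightarrow> e \<in> W' r)"
    "det (indicator_diff_mat k k \<sigma> U' W') = det (indicator_diff_mat k k \<sigma> U W)"
proof -
  have "\<exists>U' W'. (\<forall>r<k. U' r \<in> F \<and> W' r \<in> F) \<and> U' r0 = U r0 \<and> W' r0 = W r0 \<and>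
      (\<forall>r<n. r \<noteq> r0 \<longrightarrow> (e \<in> U' r \<longleftrightarrow> e \<in> W' r)) \<and>
      det (indicator_diff_mat k k \<sigma> U' W') = det (indicator_diff_mat k k \<sigma> U W)"
    if "n \<le> k" for n
    using that
  proof (induction n)
    case 0
    then show ?case
      using assms(4) by blast
  next
    case (Suc n)
    then obtain U1 W1 where UW1: "\<forall>r<k. U1 r \<in> F \<and> W1 r \<in> F" "U1 r0 = U r0" "W1 r0 = W r0"
      "\<forall>r<n. r \<noteq> r0 \<longrightarrow> (e \<in> U1 r \<longleftrightarrow> e \<in> W1 r)"
      "det (indicator_diff_mat k k \<sigma> U1 W1) = det (indicator_diff_mat k k \<sigma> U W)"
      by auto
    show ?case
    proof (cases "n = r0")
      case True
      have "\<forall>r<Suc n. r \<noteq> r0 \<longrightarrow> (e \<in> U1 r \<longleftrightarrow> e \<in> W1 r)"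
        using UW1(4) True less_Suc_eq by auto
      then show ?thesis
        using UW1(1-3,5) by blast
    next
      case False
      have "n < k" "e \<in> U1 r0" "e \<notin> W1 r0"
        using Suc.prems UW1(2,3) assms(2,3) by auto
      then obtain U2 W2 where UW2: "\<forall>r<k. U2 r \<in> F \<and> W2 r \<in> F" "e \<in> U2 n \<longleftrightarrow> e \<in> W2 n"
        "\<forall>r'. r' \<noteq> n \<longrightarrow> U2 r' = U1 r' \<and> W2 r' = W1 r'"
        "det (indicator_diff_mat k k \<sigma> U2 W2) = det (indicator_diff_mat k k \<sigma> U1 W1)"
        by (rule indicator_diff_mat_clear_entry[OF assms(1) _ False _ _ UW1(1) agree])
      have "U2 r0 = U r0" "W2 r0 = W r0"
        using UW2(3) UW1(2,3) False by auto
      moreover have "\<forall>r<Suc n. r \<noteq> r0 \<longrightarrow> (e \<in> U2 r \<longleftrightarrow> e \<in> W2 r)"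
        using UW1(4) UW2(2,3) less_Suc_eq by auto
      ultimately show ?thesis
        using UW2(1,4) UW1(5) by auto
    qed
  qed
  then obtain U' W' where "\<forall>r<k. U' r \<in> F \<and> W' r \<in> F" "U' r0 = U r0" "W' r0 = W r0"
    "\<forall>r<k. r \<noteq> r0 \<longrightarrow> (e \<in> U' r \<longleftrightarrow> e \<in> W' r)"
    "det (indicator_diff_mat k k \<sigma> U' W') = det (indicator_diff_mat k k \<sigma> U W)"
    by blast
  then show ?thesis
    using that[of U' W'] assms(2,3) by simp
qed

lemma insert_index_less: "i < Suc k \<Longrightarrow> c < k \<Longrightarrow> insert_index i c < Suc k"
  by (simp add: insert_index_def)

lemma mat_delete_indicator_diff_mat:
  assumes "r0 < Suc k" "e < Suc k"
  shows "mat_delete (indicator_diff_mat (Suc k) (Suc k) \<sigma> U W) r0 e =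
    indicator_diff_mat k k (\<sigma> \<circ> insert_index e)
      (\<lambda>r. insert_index e -` U (insert_index r0 r)) (\<lambda>r. insert_index e -` W (insert_index r0 r))"
proof -
  have "mat_delete (indicator_diff_mat (Suc k) (Suc k) \<sigma> U W) r0 e =
      mat k k (\<lambda>(i, j). indicator_diff_mat (Suc k) (Suc k) \<sigma> U W $$ (insert_index r0 i, insert_index e j))"
    by (simp add: mat_delete_def insert_index_def indicator_diff_mat_def)
  also have "\<dots> = indicator_diff_mat k k (\<sigma> \<circ> insert_index e)
      (\<lambda>r. insert_index e -` U (insert_index r0 r)) (\<lambda>r. insert_index e -` W (insert_index r0 r))"
    by (rule indicator_diff_mat_reindex) (simp_all add: insert_index_less assms)
  finally show ?thesis .
qed

text \<open>A column e of maximal height: after clearing it with the pivot row, Laplace expansion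
  along it leaves a minor of the same kind.\<close>
lemma det_indicator_diff_mat_pivot:
  assumes "\<forall>c<Suc k. \<sigma> c \<in> {-1, 1}" "coherent_family (Suc k) h F" "\<forall>r<Suc k. U r \<in> F \<and> W r \<in> F"
    and e: "e < Suc k" "\<forall>c<Suc k. h c \<le> h e"
    and pivot: "r0 < Suc k" "e \<in> U r0" "e \<notin> W r0"
  obtains U' W' where "\<forall>r<k. U' r \<in> (\<lambda>A. insert_index e -` A) ` F \<and> W' r \<in> (\<lambda>A. insert_index e -` A) ` F"
    "det (indicator_diff_mat (Suc k) (Suc k) \<sigma> U W) \<in>
      {det (indicator_diff_mat k k (\<sigma> \<circ> insert_index e) U' W'),
       - det (indicator_diff_mat k k (\<sigma> \<circ> insert_index e) U' W')}"
proof -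
  let ?M = "indicator_diff_mat (Suc k) (Suc k) \<sigma>"
  have agree: "c \<in> A \<longleftrightarrow> c \<in> B"
    if "A \<in> F" "B \<in> F" "e \<in> A" "e \<in> B" "c < Suc k" for A B c
    using assms(2) that e unfolding coherent_family_def by blast
  obtain U' W' where UW': "\<forall>r<Suc k. U' r \<in> F \<and> W' r \<in> F" "e \<in> U' r0" "e \<notin> W' r0"
    "\<forall>r<Suc k. r \<noteq> r0 \<longrightarrow> (e \<in> U' r \<longleftrightarrow> e \<in> W' r)" "det (?M U' W') = det (?M U W)"
    using indicator_diff_mat_clear_column[OF pivot assms(3) agree] by blast
  define U'' where "U'' r = insert_index e -` U' (insert_index r0 r)" for r
  define W'' where "W'' r = insert_index e -` W' (insert_index r0 r)" for r
  let ?minor = "indicator_diff_mat k k (\<sigma> \<circ> insert_index e) U'' W''"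
  have "det (?M U' W') = ?M U' W' $$ (r0, e) * cofactor (?M U' W') r0 e"
    by (rule det_eq_cofactor_if_column_single_nonzero[OF indicator_diff_mat_carrier pivot(1) e(1)])
      (use UW'(4) e(1) in auto)
  moreover have "?M U' W' $$ (r0, e) \<in> {-1, 1}"
    using UW'(2,3) assms(1) e(1) pivot(1) by auto
  moreover have "mat_delete (?M U' W') r0 e = ?minor"
    unfolding U''_def W''_def by (rule mat_delete_indicator_diff_mat[OF pivot(1) e(1)])
  then have "cofactor (?M U' W') r0 e \<in> {det ?minor, - det ?minor}"
    unfolding cofactor_def by (cases "even (r0 + e)") simp_all
  ultimately have "det (?M U W) \<in> {det ?minor, - det ?minor}"
    using UW'(5) by auto
  moreover have "\<forall>r<k. U'' r \<in> (\<lambda>A. insert_index e -` A) ` F \<and> W'' r \<in> (\<lambda>A. insert_index e -` A) ` F"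
    using UW'(1) insert_index_less pivot(1) unfolding U''_def W''_def by blast
  ultimately show ?thesis
    by (rule that[rotated])
qed

lemma obtains_max_lessThan:
  fixes h :: "nat \<Rightarrow> 'a :: linorder"
  assumes "0 < n"
  obtains e where "e < n" "\<forall>c<n. h c \<le> h e"
proof -
  obtain e where "e < n" "Max (h ` {..<n}) = h e"
    using obtains_MAX[of "{..<n}" h] assms by auto
  then show ?thesis
    using that[of e] by (metis Max_ge finite_imageI finite_lessThan imageI lessThan_iff)
qed

lemma det_indicator_diff_mat:
  assumes "\<forall>c<k. \<sigma> c \<in> {-1, 1}" "coherent_family k h F" "\<forall>r<k. U r \<in> F \<and> W r \<in> F"
  shows "det (indicator_diff_mat k k \<sigma> U W) \<in> {-1, 0, 1}"
  using assms
proof (induction k arbitrary: \<sigma> h F U W)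
  case 0
  show ?case by (simp add: indicator_diff_mat_def det_def)
next
  case (Suc k)
  let ?M = "indicator_diff_mat (Suc k) (Suc k) \<sigma>"
  obtain e where e: "e < Suc k" "\<forall>c<Suc k. h c \<le> h e"
    using obtains_max_lessThan[of "Suc k" h] by blast
  have minor: "\<forall>c<k. (\<sigma> \<circ> insert_index e) c \<in> {-1, 1}"
    "coherent_family k (h \<circ> insert_index e) ((\<lambda>A. insert_index e -` A) ` F)"
    using Suc.prems(1,2) insert_index_less e(1) by (auto intro: coherent_family_vimage)
  have pivot: "det (?M U W) \<in> {-1, 0, 1}"
    if pivot_row: "r0 < Suc k" "e \<in> U r0" "e \<notin> W r0"
      and rows: "\<forall>r<Suc k. U r \<in> F \<and> W r \<in> F" for r0 U W
  proof -
    obtain U' W' where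
      minor_rows: "\<forall>r<k. U' r \<in> (\<lambda>A. insert_index e -` A) ` F \<and> W' r \<in> (\<lambda>A. insert_index e -` A) ` F"
      and "det (?M U W) \<in> {det (indicator_diff_mat k k (\<sigma> \<circ> insert_index e) U' W'),
        - det (indicator_diff_mat k k (\<sigma> \<circ> insert_index e) U' W')}"
      using det_indicator_diff_mat_pivot[OF Suc.prems(1,2) rows e pivot_row] by blast
    moreover have "det (indicator_diff_mat k k (\<sigma> \<circ> insert_index e) U' W') \<in> {-1, 0, 1}"
      by (rule Suc.IH[OF minor minor_rows])
    ultimately show ?thesis
      by auto
  qed
  consider (zero) "\<forall>r<Suc k. e \<in> U r \<longleftrightarrow> e \<in> W r"
    | (pos) r0 where "r0 < Suc k" "e \<in> U r0" "e \<notin> W r0"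
    | (neg) r0 where "r0 < Suc k" "e \<notin> U r0" "e \<in> W r0"
    by blast
  then show ?case
  proof cases
    case zero
    then have "det (?M U W) = ?M U W $$ (0, e) * cofactor (?M U W) 0 e"
      by (intro det_eq_cofactor_if_column_single_nonzero[OF indicator_diff_mat_carrier _ e(1)]) (auto simp: e(1))
    then show ?thesis
      using zero e(1) by simp
  next
    case pos
    then show ?thesis
      using pivot Suc.prems(3) by blast
  next
    case neg
    have "det (?M (U(r0 := W r0)) (W(r0 := U r0))) \<in> {-1, 0, 1}"
      by (rule pivot[of r0]) (use neg Suc.prems(3) in auto)
    then show ?thesis
      using det_indicator_diff_mat_negate_row[OF neg(1), of \<sigma> U W] by auto
  qed
qed

lemma pick_less_if_less_card:
  assumes "i < card {a. a < m \<and> a \<in> I}"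
  shows "pick I i < m"
proof -
  have "pick {a. a < m \<and> a \<in> I} i \<in> {a. a < m \<and> a \<in> I}"
    by (rule pick_in_set_le) (use assms in simp)
  then show ?thesis
    using pick_reduce_set[OF assms] by simp
qed

lemma totally_unimodular_indicator_diff_mat:
  assumes "\<forall>c<n. \<sigma> c \<in> {-1, 1}" "coherent_family n h F" "\<forall>r<m. U r \<in> F \<and> W r \<in> F"
  shows "totally_unimodular (indicator_diff_mat m n \<sigma> U W)"
  unfolding totally_unimodular_def
proof (intro allI impI)
  fix I J
  let ?A = "indicator_diff_mat m n \<sigma> U W"
  assume square: "dim_row (submatrix ?A I J) = dim_col (submatrix ?A I J)"
  define k where "k = card {i. i < m \<and> i \<in> I}"
  have k: "card {j. j < n \<and> j \<in> J} = k"
    using square by (simp add: dim_submatrix indicator_diff_mat_def k_def)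
  have pick_I: "pick I i < m" if "i < k" for i
    using pick_less_if_less_card that unfolding k_def by blast
  have pick_J: "pick J j < n" if "j < k" for j
    using pick_less_if_less_card[of j n J] that k by simp
  have "submatrix ?A I J = indicator_diff_mat k k (\<sigma> \<circ> pick J)
      (\<lambda>i. pick J -` U (pick I i)) (\<lambda>i. pick J -` W (pick I i))"
    unfolding submatrix_def using indicator_diff_mat_reindex[of k "pick I" m k "pick J" n \<sigma> U W]
      pick_I pick_J k by (simp add: indicator_diff_mat_def k_def)
  moreover have "coherent_family k (h \<circ> pick J) ((\<lambda>A. pick J -` A) ` F)"
    by (rule coherent_family_vimage[OF assms(2) pick_J])
  ultimately show "det (submatrix ?A I J) \<in> {-1, 0, 1}"
    using det_indicator_diff_mat[of k "\<sigma> \<circ> pick J"] assms(1,3) pick_I pick_J by auto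
qed

section \<open>The implication forest\<close>

locale implication_forest =
  fixes cs :: "recourse_constr list"
  assumes A2: "assumption_A2 cs" and A3: "assumption_A3 cs"
begin

lemma link_edge_sym: "link_edge cs p j k \<Longrightarrow> link_edge cs p k j"
  unfolding link_edge_def by blast

lemma link_edge_endpoints:
  "link_edge cs p a b \<Longrightarrow> link_edge cs p a' b' \<Longrightarrow> (a = a' \<and> b = b') \<or> (a = b' \<and> b = a')"
  unfolding link_edge_def by auto

definition impl_path :: "nat \<Rightarrow> (nat \<Rightarrow> nat) \<Rightarrow> (nat \<Rightarrow> nat) \<Rightarrow> bool" where
  "impl_path N P Q \<longleftrightarrow> inj_on P {..N} \<and> inj_on Q {..<N} \<and>
     (\<forall>i<N. link_edge cs (Q i) (P i) (P (Suc i)))"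

lemma impl_path_close:
  assumes "impl_path N P Q" "link_edge cs q (P N) (P 0)" "q \<notin> Q ` {..<N}"
  shows False
proof -
  let ?es = "map Q [0..<N] @ [q]" and ?vs = "map P [0..<Suc N] @ [P 0]"
  have "set [0..<Suc N] = {..N}"
    by auto
  then have "distinct (map P [0..<Suc N])"
    using assms(1) by (simp add: impl_path_def distinct_map del: upt_Suc)
  then have "distinct (tl ?vs)"
    by (simp del: upt_Suc add: map_tl[symmetric] tl_upt) (simp add: upt_conv_Cons del: upt_Suc)
  moreover have "distinct ?es"
    using assms(1,3) by (simp add: impl_path_def distinct_map atLeast0LessThan)
  moreover have "link_edge cs (?es ! i) (?vs ! i) (?vs ! Suc i)" if "i < length ?es" for i
    using that assms(1,2) by (auto simp: impl_path_def nth_append less_Suc_eq simp del: upt_Suc)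
  moreover have "hd ?vs = P 0"
    by (simp add: upt_conv_Cons del: upt_Suc)
  ultimately have "impl_cycle cs ?es ?vs"
    unfolding impl_cycle_def by (simp del: upt_Suc)
  then show False
    using A3 unfolding assumption_A3_def by blast
qed

lemma impl_path_snoc:
  assumes "impl_path N P Q" "link_edge cs q (P N) v" "v \<notin> P ` {..N}" "q \<notin> Q ` {..<N}"
  shows "impl_path (Suc N) (P(Suc N := v)) (Q(N := q))"
  using assms unfolding impl_path_def
  by (auto simp: less_Suc_eq inj_on_def atMost_Suc lessThan_Suc)

lemma not_link_edge_loop: "\<not> link_edge cs p j j"
proof
  assume "link_edge cs p j j"
  moreover have "impl_path 0 (\<lambda>_. j) Q" for Q
    by (simp add: impl_path_def)
  ultimately show False
    using impl_path_close[of 0 "\<lambda>_. j"] by simp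
qed

lemma impl_connected_link_edge: "link_edge cs p j k \<Longrightarrow> impl_connected cs j k"
  unfolding impl_connected_def impl_adj_def by blast

lemma impl_connected_sym: "impl_connected cs j k \<Longrightarrow> impl_connected cs k j"
proof -
  have "symp (impl_adj cs)"
    using link_edge_sym unfolding impl_adj_def symp_def by blast
  then show "impl_connected cs j k \<Longrightarrow> impl_connected cs k j"
    unfolding impl_connected_def by (rule sympD[OF symp_rtranclp])
qed

lemma impl_connected_trans:
  "impl_connected cs j k \<Longrightarrow> impl_connected cs k l \<Longrightarrow> impl_connected cs j l"
  unfolding impl_connected_def by simp

text \<open>The K-hot feature of a component is unique by A.2.\<close>
definition root :: "nat \<Rightarrow> nat" where
  "root j = (if \<exists>k\<in>khot_indices cs. impl_connected cs j k
     then THE k. k \<in> khot_indices cs \<and> impl_connected cs j k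
     else LEAST k. impl_connected cs j k)"

lemma khot_in_component_unique:
  "k \<in> khot_indices cs \<Longrightarrow> impl_connected cs j k \<Longrightarrow>
   k' \<in> khot_indices cs \<Longrightarrow> impl_connected cs j k' \<Longrightarrow> k = k'"
  using A2 impl_connected_sym impl_connected_trans unfolding assumption_A2_def by blast

lemma root_connected: "impl_connected cs j (root j)"
proof (cases "\<exists>k\<in>khot_indices cs. impl_connected cs j k")
  case True
  then obtain k where k: "k \<in> khot_indices cs" "impl_connected cs j k"
    by blast
  have "(THE k. k \<in> khot_indices cs \<and> impl_connected cs j k) = k"
    using k khot_in_component_unique by blast
  then show ?thesis
    using True k unfolding root_def by simp
next
  case False
  then show ?thesis
    unfolding root_def using LeastI[of "impl_connected cs j" j]
    by (simp add: impl_connected_def)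
qed

lemma root_eq_if_connected: "impl_connected cs j k \<Longrightarrow> root j = root k"
proof -
  assume "impl_connected cs j k"
  then have "impl_connected cs j = impl_connected cs k"
    using impl_connected_sym impl_connected_trans by blast
  then show "root j = root k"
    unfolding root_def by simp
qed

lemma root_khot: "j \<in> khot_indices cs \<Longrightarrow> root j = j"
  using khot_in_component_unique[of _ j] root_connected[of j]
  unfolding root_def by (auto simp: impl_connected_def)

lemma link_edge_root_eq: "link_edge cs p j k \<Longrightarrow> root j = root k"
  by (rule root_eq_if_connected[OF impl_connected_link_edge])

definition root_dist :: "nat \<Rightarrow> nat" where
  "root_dist j = (LEAST n. (impl_adj cs ^^ n) j (root j))"

lemma relpowp_root_dist: "(impl_adj cs ^^ root_dist j) j (root j)"
proof -
  have "\<exists>n. (impl_adj cs ^^ n) j (root j)"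
    using root_connected[of j] unfolding impl_connected_def rtranclp_power by blast
  then show ?thesis
    unfolding root_dist_def by (rule LeastI_ex)
qed

lemma root_dist_le: "(impl_adj cs ^^ n) j (root j) \<Longrightarrow> root_dist j \<le> n"
  unfolding root_dist_def by (rule Least_le)

lemma root_dist_eq_0_iff: "root_dist j = 0 \<longleftrightarrow> root j = j"
  using relpowp_root_dist[of j] root_dist_le[of 0 j] by auto

lemma root_dist_link_edge_le:
  assumes "link_edge cs p j k"
  shows "root_dist j \<le> Suc (root_dist k)"
proof -
  have "impl_adj cs j k"
    using assms unfolding impl_adj_def by blast
  then have "(impl_adj cs ^^ Suc (root_dist k)) j (root k)"
    using relpowp_Suc_I2 relpowp_root_dist by metis
  then show ?thesis
    using link_edge_root_eq[OF assms] root_dist_le by metis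
qed

lemma root_dist_Suc_link_edge:
  assumes "root_dist j = Suc n"
  obtains p k where "link_edge cs p j k" "root_dist k = n"
proof -
  have "(impl_adj cs ^^ Suc n) j (root j)"
    using relpowp_root_dist[of j] assms by simp
  then obtain k where k: "impl_adj cs j k" "(impl_adj cs ^^ n) k (root j)"
    by (rule relpowp_Suc_E2)
  then obtain p where p: "link_edge cs p j k"
    unfolding impl_adj_def by blast
  have "root_dist k \<le> n"
    using root_dist_le k(2) link_edge_root_eq[OF p] by metis
  moreover have "root_dist j \<le> Suc (root_dist k)"
    by (rule root_dist_link_edge_le[OF p])
  ultimately show ?thesis
    using that[OF p] assms by simp
qed

definition parent_link :: "nat \<Rightarrow> nat \<times> nat" where
  "parent_link j = (SOME (p, k). link_edge cs p j k \<and> Suc (root_dist k) = root_dist j)"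

definition parent_edge :: "nat \<Rightarrow> nat" where
  "parent_edge j = fst (parent_link j)"

definition parent :: "nat \<Rightarrow> nat" where
  "parent j = snd (parent_link j)"

lemma link_edge_parent:
  assumes "0 < root_dist j"
  shows "link_edge cs (parent_edge j) j (parent j) \<and> Suc (root_dist (parent j)) = root_dist j"
proof -
  obtain n where n: "root_dist j = Suc n"
    using assms gr0_implies_Suc by blast
  then obtain p k where "link_edge cs p j k" "root_dist k = n"
    by (rule root_dist_Suc_link_edge)
  then have "\<exists>pk. case pk of (p, k) \<Rightarrow> link_edge cs p j k \<and> Suc (root_dist k) = root_dist j"
    using n by auto
  then show ?thesis
    unfolding parent_edge_def parent_def parent_link_def
    by (metis (mono_tags, lifting) case_prod_beta someI_ex)
qed

definition ancestor :: "nat \<Rightarrow> nat \<Rightarrow> nat" where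
  "ancestor j i = (parent ^^ i) j"

definition ancestor_edge :: "nat \<Rightarrow> nat \<Rightarrow> nat" where
  "ancestor_edge j i = parent_edge (ancestor j i)"

lemma ancestor_0 [simp]: "ancestor j 0 = j"
  by (simp add: ancestor_def)

lemma ancestor_Suc: "ancestor j (Suc i) = parent (ancestor j i)"
  by (simp add: ancestor_def)

lemma root_dist_ancestor:
  "i \<le> root_dist j \<Longrightarrow> root_dist (ancestor j i) = root_dist j - i \<and> root (ancestor j i) = root j"
proof (induction i)
  case 0
  then show ?case by simp
next
  case (Suc i)
  then have IH: "root_dist (ancestor j i) = root_dist j - i" "root (ancestor j i) = root j"
    by auto
  then have "0 < root_dist (ancestor j i)"
    using Suc.prems by simp
  from link_edge_parent[OF this] show ?case
    using IH link_edge_root_eq unfolding ancestor_Suc by fastforce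
qed

lemma link_edge_ancestor_edge:
  assumes "i < root_dist j"
  shows "link_edge cs (ancestor_edge j i) (ancestor j i) (ancestor j (Suc i))"
proof -
  have "0 < root_dist (ancestor j i)"
    using root_dist_ancestor[of i j] assms by simp
  then show ?thesis
    using link_edge_parent unfolding ancestor_edge_def ancestor_Suc by blast
qed

lemma ancestor_root_dist: "ancestor j (root_dist j) = root j"
  using root_dist_ancestor[of "root_dist j" j] root_dist_eq_0_iff by simp

lemma ancestor_eq_imp_eq:
  assumes "a \<le> root_dist k" "b \<le> root_dist k'" "root_dist k = root_dist k'"
    and "ancestor k a = ancestor k' b"
  shows "a = b"
proof -
  have "root_dist k - a = root_dist k' - b"
    using root_dist_ancestor[OF assms(1)] root_dist_ancestor[OF assms(2)] assms(4) by simp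
  then show ?thesis
    using assms(1-3) by arith
qed

lemma ancestor_edge_endpoints:
  assumes "i < root_dist k" "link_edge cs (ancestor_edge k i) a b"
  shows "root_dist a \<le> root_dist k \<and> root_dist b \<le> root_dist k \<and>
    (root_dist a = Suc (root_dist b) \<or> root_dist b = Suc (root_dist a))"
proof -
  have "(ancestor k i = a \<and> ancestor k (Suc i) = b) \<or> (ancestor k i = b \<and> ancestor k (Suc i) = a)"
    using link_edge_endpoints[OF link_edge_ancestor_edge[OF assms(1)] assms(2)] .
  moreover have "root_dist (ancestor k i) = root_dist k - i"
    "root_dist (ancestor k (Suc i)) = root_dist k - Suc i"
    using root_dist_ancestor assms(1) by auto
  ultimately show ?thesis
    using assms(1) by auto
qed

lemma ancestor_edge_eq_imp_eq:
  assumes "a < root_dist k" "b < root_dist k'" "root_dist k = root_dist k'"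
    and "ancestor_edge k a = ancestor_edge k' b"
  shows "a = b \<and> ancestor k a = ancestor k' b"
proof -
  have "link_edge cs (ancestor_edge k a) (ancestor k a) (ancestor k (Suc a))"
    using link_edge_ancestor_edge[OF assms(1)] .
  moreover have "link_edge cs (ancestor_edge k a) (ancestor k' b) (ancestor k' (Suc b))"
    using link_edge_ancestor_edge[OF assms(2)] assms(4) by simp
  ultimately consider
      "ancestor k a = ancestor k' b" "ancestor k (Suc a) = ancestor k' (Suc b)"
    | "ancestor k a = ancestor k' (Suc b)" "ancestor k (Suc a) = ancestor k' b"
    using link_edge_endpoints by blast
  then show ?thesis
  proof cases
    case 1
    then show ?thesis
      using ancestor_eq_imp_eq[of a k b k'] assms by simp
  next
    case 2
    then have "a = Suc b" "Suc a = b"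
      using ancestor_eq_imp_eq[of a k "Suc b" k'] ancestor_eq_imp_eq[of "Suc a" k b k'] assms by simp_all
    then show ?thesis
      by simp
  qed
qed


definition first_meet :: "nat \<Rightarrow> nat \<Rightarrow> nat \<Rightarrow> bool" where
  "first_meet k k' m \<longleftrightarrow> m \<le> root_dist k \<and> root_dist k' = root_dist k \<and>
     ancestor k m = ancestor k' m \<and> (\<forall>i<m. ancestor k i \<noteq> ancestor k' i)"

lemma first_meet_exists:
  assumes "root_dist k = root_dist k'" "root k = root k'"
  obtains m where "first_meet k k' m"
proof -
  have meet: "ancestor k (root_dist k) = ancestor k' (root_dist k)"
    using ancestor_root_dist[of k] ancestor_root_dist[of k'] assms by simp
  define m where "m = (LEAST i. ancestor k i = ancestor k' i)"
  have "ancestor k m = ancestor k' m" "m \<le> root_dist k"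
    unfolding m_def
    by (rule LeastI[of "\<lambda>i. ancestor k i = ancestor k' i", OF meet], rule Least_le, rule meet)
  moreover have "\<forall>i<m. ancestor k i \<noteq> ancestor k' i"
    unfolding m_def using not_less_Least by blast
  ultimately have "first_meet k k' m"
    unfolding first_meet_def using assms(1) by simp
  then show ?thesis
    by (rule that)
qed

text \<open>The path from k up to the first common ancestor of k and k' and down again to k'.\<close>
definition valley_vertex :: "nat \<Rightarrow> nat \<Rightarrow> nat \<Rightarrow> nat \<Rightarrow> nat" where
  "valley_vertex k k' m i = (if i \<le> m then ancestor k i else ancestor k' (2 * m - i))"

definition valley_edge :: "nat \<Rightarrow> nat \<Rightarrow> nat \<Rightarrow> nat \<Rightarrow> nat" where
  "valley_edge k k' m i = (if i < m then ancestor_edge k i else ancestor_edge k' (2 * m - Suc i))"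

lemma valley_vertex_eq:
  assumes "first_meet k k' m"
  shows "valley_vertex k k' m i = (if i < m then ancestor k i else ancestor k' (2 * m - i))"
  using assms by (auto simp: valley_vertex_def first_meet_def)

lemma valley_vertex_ends:
  "first_meet k k' m \<Longrightarrow> valley_vertex k k' m 0 = k \<and> valley_vertex k k' m (2 * m) = k'"
  by (auto simp: valley_vertex_eq first_meet_def)

lemma root_dist_valley_vertex_le:
  "first_meet k k' m \<Longrightarrow> i \<le> 2 * m \<Longrightarrow> root_dist (valley_vertex k k' m i) \<le> root_dist k"
  using root_dist_ancestor[of _ k] root_dist_ancestor[of _ k']
  by (auto simp: valley_vertex_def first_meet_def)

lemma link_edge_valley_edge:
  assumes "first_meet k k' m" "i < 2 * m"
  shows "link_edge cs (valley_edge k k' m i) (valley_vertex k k' m i) (valley_vertex k k' m (Suc i))"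
proof (cases "i < m")
  case True
  then show ?thesis
    using link_edge_ancestor_edge[of i k] assms(1)
    by (simp add: valley_vertex_def valley_edge_def first_meet_def)
next
  case False
  define b where "b = 2 * m - Suc i"
  have b: "b < root_dist k'" "Suc b = 2 * m - i"
    using assms False by (auto simp: b_def first_meet_def)
  have "link_edge cs (ancestor_edge k' b) (ancestor k' (Suc b)) (ancestor k' b)"
    using link_edge_sym[OF link_edge_ancestor_edge[OF b(1)]] .
  then show ?thesis
    using False b by (simp add: valley_vertex_eq[OF assms(1)] valley_edge_def b_def)
qed

lemma valley_edge_endpoints:
  assumes "first_meet k k' m" "i < 2 * m" "link_edge cs (valley_edge k k' m i) a b"
  shows "root_dist a \<le> root_dist k \<and> root_dist b \<le> root_dist k \<and>
    (root_dist a = Suc (root_dist b) \<or> root_dist b = Suc (root_dist a))"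
  using assms ancestor_edge_endpoints[of i k a b] ancestor_edge_endpoints[of "2 * m - Suc i" k' a b]
  by (auto simp: valley_edge_def first_meet_def split: if_splits)

lemma valley_vertex_eq_imp_eq:
  assumes meet: "first_meet k k' m" and ij: "i \<le> j" "j \<le> 2 * m"
    and eq: "valley_vertex k k' m i = valley_vertex k k' m j"
  shows "i = j"
proof -
  have m: "m \<le> root_dist k" "root_dist k' = root_dist k" "\<forall>i<m. ancestor k i \<noteq> ancestor k' i"
    using meet by (auto simp: first_meet_def)
  show ?thesis
  proof (cases "j < m")
    case True
    then have "ancestor k i = ancestor k j"
      using eq ij by (simp add: valley_vertex_eq[OF meet])
    then show ?thesis
      using ancestor_eq_imp_eq[of i k j k] True ij m(1) by linarith
  next
    case j: False
    show ?thesis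
    proof (cases "i < m")
      case True
      then have "ancestor k i = ancestor k' (2 * m - j)"
        using eq j by (simp add: valley_vertex_eq[OF meet])
      moreover have "i = 2 * m - j"
        using ancestor_eq_imp_eq[of i k "2 * m - j" k'] calculation True j ij m(1,2) by linarith
      ultimately show ?thesis
        using m(3) True by auto
    next
      case False
      then have "ancestor k' (2 * m - i) = ancestor k' (2 * m - j)"
        using eq j by (simp add: valley_vertex_eq[OF meet])
      then have "2 * m - i = 2 * m - j"
        using ancestor_eq_imp_eq[of "2 * m - i" k' "2 * m - j" k'] False j m(1,2) by linarith
      then show ?thesis
        using ij by linarith
    qed
  qed
qed

lemma inj_on_valley_vertex:
  assumes "first_meet k k' m"
  shows "inj_on (valley_vertex k k' m) {..2 * m}"
proof (rule inj_onI)
  fix i j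
  assume "i \<in> {..2 * m}" "j \<in> {..2 * m}" "valley_vertex k k' m i = valley_vertex k k' m j"
  then show "i = j"
    using valley_vertex_eq_imp_eq[OF assms, of i j] valley_vertex_eq_imp_eq[OF assms, of j i]
    by (cases "i \<le> j") auto
qed

lemma valley_edge_eq_imp_eq:
  assumes meet: "first_meet k k' m" and ij: "i \<le> j" "j < 2 * m"
    and eq: "valley_edge k k' m i = valley_edge k k' m j"
  shows "i = j"
proof -
  have m: "m \<le> root_dist k" "root_dist k' = root_dist k" "\<forall>i<m. ancestor k i \<noteq> ancestor k' i"
    using meet by (auto simp: first_meet_def)
  show ?thesis
  proof (cases "j < m")
    case True
    then have "ancestor_edge k i = ancestor_edge k j"
      using eq ij by (simp add: valley_edge_def)
    moreover have "i < root_dist k" "j < root_dist k"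
      using True ij m(1) by linarith+
    ultimately show ?thesis
      using ancestor_edge_eq_imp_eq[of i k j k] by blast
  next
    case j_right: False
    have j_bound: "2 * m - Suc j < root_dist k'"
      using j_right ij(2) m(1,2) by linarith
    show ?thesis
    proof (cases "i < m")
      case True
      then have edges: "ancestor_edge k i = ancestor_edge k' (2 * m - Suc j)"
        using eq j_right by (simp add: valley_edge_def)
      have "i < root_dist k"
        using True m(1) by linarith
      from ancestor_edge_eq_imp_eq[OF this j_bound m(2)[symmetric] edges]
      have "i = 2 * m - Suc j" "ancestor k i = ancestor k' (2 * m - Suc j)"
        by blast+
      then have "ancestor k i = ancestor k' i"
        by simp
      then show ?thesis
        using m(3) True by blast
    next
      case False
      then have edges: "ancestor_edge k' (2 * m - Suc i) = ancestor_edge k' (2 * m - Suc j)"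
        using eq j_right by (simp add: valley_edge_def)
      have "2 * m - Suc i < root_dist k'"
        using False ij m(1,2) by linarith
      from ancestor_edge_eq_imp_eq[OF this j_bound refl edges]
      have "2 * m - Suc i = 2 * m - Suc j"
        by simp
      then show ?thesis
        using ij by linarith
    qed
  qed
qed

lemma inj_on_valley_edge:
  assumes "first_meet k k' m"
  shows "inj_on (valley_edge k k' m) {..<2 * m}"
proof (rule inj_onI)
  fix i j
  assume "i \<in> {..<2 * m}" "j \<in> {..<2 * m}" "valley_edge k k' m i = valley_edge k k' m j"
  then show "i = j"
    using valley_edge_eq_imp_eq[OF assms, of i j] valley_edge_eq_imp_eq[OF assms, of j i]
    by (cases "i \<le> j") auto
qed

lemma impl_path_valley:
  "first_meet k k' m \<Longrightarrow> impl_path (2 * m) (valley_vertex k k' m) (valley_edge k k' m)"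
  unfolding impl_path_def
  using inj_on_valley_vertex inj_on_valley_edge link_edge_valley_edge by blast

text \<open>An edge between two vertices of the same distance from the root would close the
  valley path between them into a cycle.\<close>
lemma link_edge_root_dist_neq:
  assumes "link_edge cs p j k"
  shows "root_dist j \<noteq> root_dist k"
proof
  assume eq: "root_dist j = root_dist k"
  obtain m where m: "first_meet k j m"
    using first_meet_exists[of k j] eq link_edge_root_eq[OF assms] by metis
  have "p \<notin> valley_edge k j m ` {..<2 * m}"
  proof
    assume "p \<in> valley_edge k j m ` {..<2 * m}"
    then obtain i where "i < 2 * m" "link_edge cs (valley_edge k j m i) j k"
      using assms by auto
    then show False
      using valley_edge_endpoints[OF m] eq by fastforce
  qed
  then show False
    using impl_path_close[OF impl_path_valley[OF m]] valley_vertex_ends[OF m] assms by auto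
qed

text \<open>A second edge from j towards the root, besides its parent edge, would close a cycle
  through the valley path between the two lower endpoints.\<close>
lemma link_edge_parent_unique:
  assumes "link_edge cs p j k" "root_dist j = Suc (root_dist k)"
  shows "parent_edge j = p \<and> parent j = k"
proof (rule ccontr)
  assume not_parent: "\<not> (parent_edge j = p \<and> parent j = k)"
  let ?p' = "parent_edge j" and ?k' = "parent j"
  have p': "link_edge cs ?p' j ?k'" "root_dist ?k' = root_dist k"
    using link_edge_parent[of j] assms(2) by auto
  have "p \<noteq> ?p'"
    using link_edge_endpoints[OF assms(1)] p' not_parent assms(2) by force
  obtain m where m: "first_meet k ?k' m"
    using first_meet_exists[of k ?k'] p'(2) link_edge_root_eq assms(1) p'(1) by metis
  let ?P = "valley_vertex k ?k' m" and ?Q = "valley_edge k ?k' m"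
  have too_deep: "e \<notin> ?Q ` {..<2 * m}" if e_link: "link_edge cs e j v" for e v
  proof
    assume "e \<in> ?Q ` {..<2 * m}"
    then obtain i where "i < 2 * m" "link_edge cs (?Q i) j v"
      using e_link by auto
    then show False
      using valley_edge_endpoints[OF m] assms(2) by fastforce
  qed
  have "j \<notin> ?P ` {..2 * m}"
    using root_dist_valley_vertex_le[OF m] assms(2) by fastforce
  moreover have "link_edge cs ?p' (?P (2 * m)) j"
    using link_edge_sym[OF p'(1)] valley_vertex_ends[OF m] by simp
  ultimately have "impl_path (Suc (2 * m)) (?P(Suc (2 * m) := j)) (?Q(2 * m := ?p'))"
    using impl_path_snoc[OF impl_path_valley[OF m] _ _ too_deep[OF p'(1)]] by blast
  moreover have "link_edge cs p ((?P(Suc (2 * m) := j)) (Suc (2 * m))) ((?P(Suc (2 * m) := j)) 0)"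
    using assms(1) valley_vertex_ends[OF m] by simp
  moreover have "p \<notin> (?Q(2 * m := ?p')) ` {..<Suc (2 * m)}"
    using too_deep[OF assms(1)] \<open>p \<noteq> ?p'\<close> by (auto simp: lessThan_Suc)
  ultimately show False
    by (rule impl_path_close)
qed

lemma link_edge_orientation:
  assumes "link_edge cs p j k"
  shows "(parent_edge j = p \<and> parent j = k \<and> root_dist j = Suc (root_dist k)) \<or>
    (parent_edge k = p \<and> parent k = j \<and> root_dist k = Suc (root_dist j))"
proof -
  have "root_dist j = Suc (root_dist k) \<or> root_dist k = Suc (root_dist j)"
    using root_dist_link_edge_le[OF assms] root_dist_link_edge_le[OF link_edge_sym[OF assms]]
      link_edge_root_dist_neq[OF assms] by linarith
  then show ?thesis
  proof
    assume "root_dist j = Suc (root_dist k)"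
    then show ?thesis
      using link_edge_parent_unique[OF assms] by simp
  next
    assume "root_dist k = Suc (root_dist j)"
    then show ?thesis
      using link_edge_parent_unique[OF link_edge_sym[OF assms]] by simp
  qed
qed

end

section \<open>The constraint rows as differences of root paths\<close>

lemma sum_telescope_Max:
  fixes f :: "nat \<Rightarrow> 'a :: ab_group_add"
  assumes "finite A"
  shows "(\<Sum>j\<in>A. f j - (if {i \<in> A. i < j} = {} then 0 else f (Max {i \<in> A. i < j}))) =
    (if A = {} then 0 else f (Max A))"
  using assms
proof (induction A rule: finite_linorder_max_induct)
  case empty
  then show ?case by simp
next
  case (insert b A)
  define g where "g X j = f j - (if {i \<in> X. i < j} = {} then 0 else f (Max {i \<in> X. i < j}))"
    for X j
  have "b \<notin> A"
    using insert.hyps(2) by blast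
  have earlier: "{i \<in> insert b A. i < j} = {i \<in> A. i < j}" if "j \<in> A" for j
    using insert.hyps(2) that by auto
  have "g (insert b A) j = g A j" if "j \<in> A" for j
    by (simp only: g_def earlier[OF that])
  then have "sum (g (insert b A)) A = sum (g A) A"
    by (rule sum.cong[OF refl])
  moreover have "sum (g (insert b A)) (insert b A) = g (insert b A) b + sum (g (insert b A)) A"
    by (rule sum.insert[OF insert.hyps(1) \<open>b \<notin> A\<close>])
  ultimately have "sum (g (insert b A)) (insert b A) = g (insert b A) b + sum (g A) A"
    by simp
  also have "{i \<in> insert b A. i < b} = A"
    using insert.hyps(2) by auto
  then have "g (insert b A) b = f b - (if A = {} then 0 else f (Max A))"
    unfolding g_def by simp
  also have "sum (g A) A = (if A = {} then 0 else f (Max A))"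
    using insert.IH unfolding g_def .
  finally have "sum (g (insert b A)) (insert b A) = f b"
    by simp
  moreover have "Max (insert b A) = b"
    using insert.hyps by (intro Max_eqI) auto
  ultimately show ?case
    unfolding g_def by simp
qed

locale recourse_system = implication_forest cs
  for cs :: "recourse_constr list" +
  fixes d :: nat
  assumes wf: "\<forall>con\<in>set cs. wf_constr d con" and A1: "assumption_A1 cs"
begin

lemma link_edge_less:
  assumes "link_edge cs p j k"
  shows "j < d \<and> k < d"
proof -
  obtain tj tk where p: "p < length cs" "cs ! p = Link j tj k tk \<or> cs ! p = Link k tk j tj"
    using assms unfolding link_edge_def by blast
  then have "wf_constr d (cs ! p)"
    using wf by simp
  then show ?thesis
    using p(2) by auto
qed

lemma wf_KHot:
  assumes "r < length cs" "cs ! r = KHot J s t K"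
  shows "J \<subseteq> {..<d}" "\<forall>j\<in>J. s j \<in> {1, -1}"
  using wf nth_mem[OF assms(1)] assms(2) by fastforce+

definition khot_set :: "nat \<Rightarrow> nat set" where
  "khot_set q = (case cs ! q of KHot J s t K \<Rightarrow> J | _ \<Rightarrow> {})"

definition khot_sign :: "nat \<Rightarrow> nat \<Rightarrow> int" where
  "khot_sign q = (case cs ! q of KHot J s t K \<Rightarrow> s | _ \<Rightarrow> (\<lambda>_. 0))"

definition khot_kind :: "nat \<Rightarrow> nat \<Rightarrow> term_kind" where
  "khot_kind q = (case cs ! q of KHot J s t K \<Rightarrow> t | _ \<Rightarrow> (\<lambda>_. TX))"

definition khot_constr :: "nat \<Rightarrow> nat" where
  "khot_constr j = (SOME q. q < length cs \<and> j \<in> khot_set q)"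

lemma mem_khot_indices_iff: "j \<in> khot_indices cs \<longleftrightarrow> (\<exists>q<length cs. j \<in> khot_set q)"
proof
  assume "j \<in> khot_indices cs"
  then obtain con where "con \<in> set cs" "j \<in> (case con of KHot J s t K \<Rightarrow> J | _ \<Rightarrow> {})"
    unfolding khot_indices_def by blast
  then show "\<exists>q<length cs. j \<in> khot_set q"
    unfolding khot_set_def by (metis in_set_conv_nth)
next
  assume "\<exists>q<length cs. j \<in> khot_set q"
  then show "j \<in> khot_indices cs"
    unfolding khot_indices_def khot_set_def by auto
qed

lemma khot_set_KHot: "j \<in> khot_set q \<Longrightarrow> \<exists>J s t K. cs ! q = KHot J s t K \<and> j \<in> J"
  unfolding khot_set_def by (cases "cs ! q") auto

lemma khot_set_less: "q < length cs \<Longrightarrow> j \<in> khot_set q \<Longrightarrow> j < d"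
  using khot_set_KHot wf_KHot(1) by blast

lemma khot_indices_less: "j \<in> khot_indices cs \<Longrightarrow> j < d"
  using mem_khot_indices_iff khot_set_less by blast

lemma khot_constr_eq:
  assumes "q < length cs" "j \<in> khot_set q"
  shows "khot_constr j = q"
proof -
  have unique: "q' = q" if q': "q' < length cs" "j \<in> khot_set q'" for q'
  proof (rule ccontr)
    assume "q' \<noteq> q"
    moreover obtain J s t K where "cs ! q = KHot J s t K" "j \<in> J"
      using khot_set_KHot[OF assms(2)] by blast
    moreover obtain J' s' t' K' where "cs ! q' = KHot J' s' t' K'" "j \<in> J'"
      using khot_set_KHot[OF q'(2)] by blast
    ultimately show False
      using A1 q'(1) assms(1) unfolding assumption_A1_def by fastforce
  qed
  have "khot_constr j < length cs \<and> j \<in> khot_set (khot_constr j)"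
    unfolding khot_constr_def by (rule someI[of _ q]) (use assms in blast)
  then show ?thesis
    using unique by blast
qed

lemma khot_constr:
  "j \<in> khot_indices cs \<Longrightarrow> khot_constr j < length cs \<and> j \<in> khot_set (khot_constr j)"
  using mem_khot_indices_iff khot_constr_eq by metis

definition khot_earlier :: "nat \<Rightarrow> nat set" where
  "khot_earlier j =
    {i \<in> khot_set (khot_constr j). i < j \<and> khot_sign (khot_constr j) i = khot_sign (khot_constr j) j}"

definition khot_rank :: "nat \<Rightarrow> nat" where
  "khot_rank j = (if j \<in> khot_indices cs then card (khot_earlier j) else 0)"

lemma finite_khot_earlier:
  assumes "j \<in> khot_indices cs"
  shows "finite (khot_earlier j)"
proof (rule finite_subset)
  show "khot_earlier j \<subseteq> {..<d}"
    using khot_constr[OF assms] khot_set_less unfolding khot_earlier_def by auto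
qed simp

lemma khot_earlier_Max:
  assumes "j \<in> khot_indices cs" "khot_earlier j \<noteq> {}"
  defines "k \<equiv> Max (khot_earlier j)"
  shows "k \<in> khot_indices cs" "khot_rank j = Suc (khot_rank k)"
proof -
  have j: "khot_constr j < length cs" "j \<in> khot_set (khot_constr j)"
    using khot_constr[OF assms(1)] by auto
  have "k \<in> khot_earlier j"
    unfolding k_def using Max_in finite_khot_earlier assms(1,2) by blast
  then have k: "k \<in> khot_set (khot_constr j)" "k < j"
    "khot_sign (khot_constr j) k = khot_sign (khot_constr j) j"
    unfolding khot_earlier_def by auto
  then show "k \<in> khot_indices cs"
    using mem_khot_indices_iff j(1) by blast
  have same_constr: "khot_constr k = khot_constr j"
    using khot_constr_eq[OF j(1) k(1)] .
  have "khot_earlier j = insert k (khot_earlier k)"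
  proof
    show "khot_earlier j \<subseteq> insert k (khot_earlier k)"
    proof
      fix i
      assume i: "i \<in> khot_earlier j"
      then have "i \<le> k"
        unfolding k_def using finite_khot_earlier[OF assms(1)] by simp
      then show "i \<in> insert k (khot_earlier k)"
        using i k same_constr unfolding khot_earlier_def by auto
    qed
    show "insert k (khot_earlier k) \<subseteq> khot_earlier j"
      using \<open>k \<in> khot_earlier j\<close> k same_constr unfolding khot_earlier_def by auto
  qed
  moreover have "k \<notin> khot_earlier k"
    unfolding khot_earlier_def by simp
  ultimately have "card (khot_earlier j) = Suc (card (khot_earlier k))"
    using finite_khot_earlier[OF \<open>k \<in> khot_indices cs\<close>] by simp
  then show "khot_rank j = Suc (khot_rank k)"
    using assms(1) \<open>k \<in> khot_indices cs\<close> unfolding khot_rank_def by simp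
qed

text \<open>The K-hot features of one sign class are roots that get chained one below the other
  in index order, so the rank of a root in its chain adds to its depth.\<close>
definition depth :: "nat \<Rightarrow> nat" where
  "depth j = root_dist j + khot_rank (root j)"

definition link_kind :: "nat \<Rightarrow> nat \<Rightarrow> term_kind" where
  "link_kind p j = (case cs ! p of Link a ta b tb \<Rightarrow> if j = a then ta else tb | _ \<Rightarrow> TX)"

text \<open>Each feature j gets three column sets anc_cols j 0, 1, 2, its levels, chosen so that the
  term of kind t is the signed indicator difference of levels term_start t and term_end t
  (see term_coef_eq).\<close>
definition term_start :: "term_kind \<Rightarrow> nat" where
  "term_start t = (if t = TA then 1 else 0)"

definition term_end :: "term_kind \<Rightarrow> nat" where
  "term_end t = (if t = TX then 1 else 2)"

text \<open>The feature and level below which j hangs: its parent, or, for a K-hot root, its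
  predecessor in its sign class.\<close>
definition attachment :: "nat \<Rightarrow> (nat \<times> nat) option" where
  "attachment j =
    (if 0 < root_dist j then Some (parent j, term_end (link_kind (parent_edge j) (parent j)))
     else if j \<in> khot_indices cs \<and> khot_earlier j \<noteq> {}
     then Some (Max (khot_earlier j), term_start (khot_kind (khot_constr j) (Max (khot_earlier j))))
     else None)"

definition attach_level :: "nat \<Rightarrow> nat" where
  "attach_level j =
    (if 0 < root_dist j then term_end (link_kind (parent_edge j) j)
     else if j \<in> khot_indices cs then term_end (khot_kind (khot_constr j) j)
     else 2)"

lemma attach_level_cases: "attach_level j = 1 \<or> attach_level j = 2"
  unfolding attach_level_def term_end_def by auto

lemma attachment_depth:
  assumes "attachment j = Some (k, i)"
  shows "depth j = Suc (depth k) \<and> k < d"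
proof (cases "0 < root_dist j")
  case True
  then have k: "k = parent j" and edge: "link_edge cs (parent_edge j) j (parent j)"
    and "Suc (root_dist (parent j)) = root_dist j"
    using assms link_edge_parent by (auto simp: attachment_def)
  moreover have "root (parent j) = root j"
    using link_edge_root_eq[OF edge] by simp
  ultimately show ?thesis
    using link_edge_less[OF edge] unfolding depth_def by simp
next
  case False
  then have j: "j \<in> khot_indices cs" "khot_earlier j \<noteq> {}" "k = Max (khot_earlier j)"
    using assms by (auto simp: attachment_def split: if_splits)
  then have "k \<in> khot_indices cs" "khot_rank j = Suc (khot_rank k)"
    using khot_earlier_Max by blast+
  moreover have "root j = j" "root k = k"
    using root_khot j(1) calculation(1) by blast+
  moreover have "root_dist j = 0" "root_dist k = 0"
    using root_dist_eq_0_iff calculation(3,4) by blast+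
  ultimately show ?thesis
    using khot_indices_less unfolding depth_def by simp
qed

definition own_cols :: "nat \<Rightarrow> nat \<Rightarrow> nat set" where
  "own_cols j i =
    (if attach_level j = 1 then (if i = 0 then {j} else if i = 2 then {d + j} else {})
     else (if i = 0 then {j, d + j} else if i = 1 then {d + j} else {}))"

text \<open>The attachment chain of j has length at most depth j (attachment_depth), which serves
  as fuel for the recursion.\<close>
primrec anc_cols_upto :: "nat \<Rightarrow> nat \<Rightarrow> nat \<Rightarrow> nat set" where
  "anc_cols_upto 0 j i = own_cols j i"
| "anc_cols_upto (Suc n) j i =
    own_cols j i \<union> (case attachment j of None \<Rightarrow> {} | Some (k, i') \<Rightarrow> anc_cols_upto n k i')"

definition anc_cols :: "nat \<Rightarrow> nat \<Rightarrow> nat set" where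
  "anc_cols j i = anc_cols_upto (depth j) j i"

definition inherited_cols :: "nat \<Rightarrow> nat set" where
  "inherited_cols j = (case attachment j of None \<Rightarrow> {} | Some (k, i) \<Rightarrow> anc_cols k i)"

lemma anc_cols_eq: "anc_cols j i = own_cols j i \<union> inherited_cols j"
proof (cases "attachment j")
  case None
  then show ?thesis
    unfolding anc_cols_def inherited_cols_def by (cases "depth j") auto
next
  case (Some a)
  then obtain k i' where "attachment j = Some (k, i')"
    by (cases a) auto
  then show ?thesis
    using attachment_depth unfolding anc_cols_def inherited_cols_def by simp
qed

lemma anc_cols_attach_level: "anc_cols j (attach_level j) = inherited_cols j"
  using anc_cols_eq[of j "attach_level j"] attach_level_cases[of j] unfolding own_cols_def by auto

lemma own_cols_subset: "own_cols j i \<subseteq> {j, d + j}"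
  unfolding own_cols_def by auto

lemma inherited_cols_feature:
  "c \<in> inherited_cols j \<Longrightarrow> \<exists>k<d. depth k < depth j \<and> c \<in> {k, d + k}"
proof (induction "depth j" arbitrary: j rule: less_induct)
  case less
  obtain k i where k: "attachment j = Some (k, i)" "c \<in> anc_cols k i"
    using less.prems unfolding inherited_cols_def by (auto split: option.splits)
  have "depth j = Suc (depth k)" "k < d"
    using attachment_depth[OF k(1)] by auto
  moreover have "c \<in> {k, d + k} \<or> c \<in> inherited_cols k"
    using k(2) anc_cols_eq own_cols_subset by blast
  ultimately show ?case
    using less.hyps[of k] by (metis lessI less_trans)
qed

lemma own_not_inherited: "j < d \<Longrightarrow> c \<in> inherited_cols j \<Longrightarrow> c \<noteq> j \<and> c \<noteq> d + j"
  using inherited_cols_feature by fastforce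

text \<open>The column a_j gets the sign -1 exactly when level 1 of j is the inherited one: then
  a_j lies in level 2 but not in level 1.\<close>
definition col_sign :: "nat \<Rightarrow> int" where
  "col_sign c = (if c < d then 1 else if attach_level (c - d) = 1 then -1 else 1)"

lemma col_sign_range: "col_sign c \<in> {-1, 1}"
  unfolding col_sign_def by auto

lemma term_coef_eq:
  assumes "j < d"
  shows "term_coef d j t c =
    col_sign c * (of_bool (c \<in> anc_cols j (term_start t)) - of_bool (c \<in> anc_cols j (term_end t)))"
proof (cases "c \<in> inherited_cols j")
  case True
  then show ?thesis
    using own_not_inherited[OF assms] anc_cols_eq unfolding term_coef_def by simp
next
  case False
  have "col_sign j = 1" "col_sign (d + j) = (if attach_level j = 1 then -1 else 1)"
    using assms by (auto simp: col_sign_def)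
  then have "term_coef d j t c =
      col_sign c * (of_bool (c \<in> own_cols j (term_start t)) - of_bool (c \<in> own_cols j (term_end t)))"
    using attach_level_cases[of j] assms
    by (cases t; cases "c = j"; cases "c = d + j")
      (auto simp: term_coef_def own_cols_def term_start_def term_end_def)
  then show ?thesis
    using False anc_cols_eq by simp
qed

text \<open>The depth of a column in the tree formed by the levels: if attach_level j = 2, then
  level 0 extends level 1 by x_j, and level 1 extends the inherited level by a_j, so x_j
  sits one step below a_j.\<close>
definition col_height :: "nat \<Rightarrow> nat" where
  "col_height c =
    2 * depth (if c < d then c else c - d) + (if c < d \<and> attach_level c \<noteq> 1 then 1 else 0)"

definition col_feature :: "nat \<Rightarrow> nat" where
  "col_feature c = (if c < d then c else c - d)"

definition col_level :: "nat \<Rightarrow> nat" where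
  "col_level c = (if c < d then 0 else if attach_level (c - d) = 1 then 2 else 1)"

lemma col_height_own:
  "k < d \<Longrightarrow> col_height k = 2 * depth k + (if attach_level k \<noteq> 1 then 1 else 0) \<and>
    col_height (d + k) = 2 * depth k"
  unfolding col_height_def by simp

lemma col_height_inherited: "c \<in> inherited_cols j \<Longrightarrow> col_height c < 2 * depth j"
  using inherited_cols_feature[of c j] col_height_own by fastforce

lemma col_height_own_cols: "j < d \<Longrightarrow> c \<in> own_cols j i \<Longrightarrow> 2 * depth j \<le> col_height c"
  using own_cols_subset col_height_own by fastforce

text \<open>This makes the levels root paths of a tree of columns.\<close>
lemma anc_cols_below:
  "j < d \<Longrightarrow> e \<in> anc_cols j i \<Longrightarrow>
   {c \<in> anc_cols j i. col_height c \<le> col_height e} =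
   {c \<in> anc_cols (col_feature e) (col_level e). col_height c \<le> col_height e}"
proof (induction "depth j" arbitrary: j i rule: less_induct)
  case less
  show ?case
  proof (cases "e \<in> inherited_cols j")
    case True
    obtain k i' where k: "attachment j = Some (k, i')" "e \<in> anc_cols k i'"
      using True unfolding inherited_cols_def by (auto split: option.splits)
    have "\<not> col_height c \<le> col_height e" if "c \<in> own_cols j i" for c
      using col_height_own_cols[OF less.prems(1) that] col_height_inherited[OF True] by linarith
    then have "{c \<in> anc_cols j i. col_height c \<le> col_height e} =
        {c \<in> anc_cols k i'. col_height c \<le> col_height e}"
      using anc_cols_eq[of j i] k(1) unfolding inherited_cols_def by auto
    then show ?thesis
      using less.hyps[of k i'] attachment_depth[OF k(1)] k(2) by simp
  next
    case False
    then have e: "e \<in> own_cols j i"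
      using anc_cols_eq less.prems(2) by blast
    then have "e = j \<or> e = d + j"
      using own_cols_subset by blast
    then have "col_feature e = j"
      "{c \<in> own_cols j i. col_height c \<le> col_height e} =
       {c \<in> own_cols j (col_level e). col_height c \<le> col_height e}"
      using e attach_level_cases[of j] col_height_own[OF less.prems(1)] less.prems(1)
      by (auto simp: col_feature_def own_cols_def col_level_def split: if_splits)
    moreover have "\<forall>c\<in>inherited_cols j. col_height c \<le> col_height e"
      using col_height_inherited col_height_own_cols[OF less.prems(1) e] by fastforce
    ultimately show ?thesis
      using anc_cols_eq[of j i] anc_cols_eq[of j "col_level e"] by blast
  qed
qed

definition anc_family :: "nat set set" where
  "anc_family = insert {} {anc_cols j i | j i. j < d}"

lemma coherent_anc_family: "coherent_family (2 * d) col_height anc_family"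
  unfolding coherent_family_def
proof (intro ballI allI impI)
  fix A B e c
  assume "A \<in> anc_family" "B \<in> anc_family" "e < 2 * d" "e \<in> A" "e \<in> B" "col_height c \<le> col_height e"
  moreover from this obtain j i j' i' where "j < d" "A = anc_cols j i" "j' < d" "B = anc_cols j' i'"
    unfolding anc_family_def by auto
  ultimately show "c \<in> A \<longleftrightarrow> c \<in> B"
    using anc_cols_below[of j e i] anc_cols_below[of j' e i'] by blast
qed

text \<open>Consecutive members of a sign class share a level, so the sum over the class
  telescopes.\<close>
lemma term_coef_khot_member:
  assumes "r < length cs" "cs ! r = KHot J s t K" "j \<in> J"
  defines "E \<equiv> {i \<in> J. i < j \<and> s i = s j}"
  shows "term_coef d j (t j) c =
    col_sign c * (of_bool (c \<in> anc_cols j (term_start (t j))) -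
      (if E = {} then 0 else of_bool (c \<in> anc_cols (Max E) (term_start (t (Max E))))))"
proof -
  have "j \<in> khot_set r"
    using assms(2,3) by (simp add: khot_set_def)
  then have j: "khot_constr j = r" "j \<in> khot_indices cs" "j < d"
    using khot_constr_eq mem_khot_indices_iff khot_set_less assms(1) by blast+
  moreover have "khot_kind r = t" "khot_sign r = s" "khot_set r = J"
    using assms(2) by (simp_all add: khot_kind_def khot_sign_def khot_set_def)
  moreover have "root_dist j = 0"
    using root_khot root_dist_eq_0_iff j(2) by blast
  ultimately have "khot_earlier j = E" "attach_level j = term_end (t j)"
    "inherited_cols j = (if E = {} then {} else anc_cols (Max E) (term_start (t (Max E))))"
    unfolding E_def khot_earlier_def attach_level_def inherited_cols_def attachment_def by auto
  then show ?thesis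
    using term_coef_eq[OF j(3), of "t j" c] anc_cols_attach_level[of j] by auto
qed

definition khot_cols :: "nat set \<Rightarrow> (nat \<Rightarrow> int) \<Rightarrow> (nat \<Rightarrow> term_kind) \<Rightarrow> int \<Rightarrow> nat set" where
  "khot_cols J s t v =
    (let M = Max {j \<in> J. s j = v}
     in if {j \<in> J. s j = v} = {} then {} else anc_cols M (term_start (t M)))"

lemma khot_sign_class_sum:
  assumes "r < length cs" "cs ! r = KHot J s t K"
  shows "(\<Sum>j\<in>{j \<in> J. s j = v}. term_coef d j (t j) c) = col_sign c * of_bool (c \<in> khot_cols J s t v)"
proof -
  define Jv where "Jv = {j \<in> J. s j = v}"
  define \<phi> where "\<phi> j = (of_bool (c \<in> anc_cols j (term_start (t j))) :: int)" for j
  have "finite J"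
    using wf_KHot(1)[OF assms] finite_subset by blast
  then have "finite Jv"
    unfolding Jv_def by simp
  have each: "term_coef d j (t j) c =
      col_sign c * (\<phi> j - (if {i \<in> Jv. i < j} = {} then 0 else \<phi> (Max {i \<in> Jv. i < j})))"
    if "j \<in> Jv" for j
  proof -
    have "j \<in> J" and earlier: "{i \<in> J. i < j \<and> s i = s j} = {i \<in> Jv. i < j}"
      using that unfolding Jv_def by auto
    show ?thesis
      using term_coef_khot_member[OF assms \<open>j \<in> J\<close>, of c] unfolding earlier \<phi>_def .
  qed
  have "(\<Sum>j\<in>Jv. term_coef d j (t j) c) =
      (\<Sum>j\<in>Jv. col_sign c * (\<phi> j - (if {i \<in> Jv. i < j} = {} then 0 else \<phi> (Max {i \<in> Jv. i < j}))))"
    by (rule sum.cong[OF refl each])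
  also have "\<dots> =
      col_sign c * (\<Sum>j\<in>Jv. \<phi> j - (if {i \<in> Jv. i < j} = {} then 0 else \<phi> (Max {i \<in> Jv. i < j})))"
    by (rule sum_distrib_left[symmetric])
  also have "\<dots> = col_sign c * (if Jv = {} then 0 else \<phi> (Max Jv))"
    unfolding sum_telescope_Max[OF \<open>finite Jv\<close>] ..
  also have "\<dots> = col_sign c * of_bool (c \<in> khot_cols J s t v)"
    unfolding khot_cols_def Jv_def[symmetric] \<phi>_def Let_def by simp
  finally show ?thesis
    unfolding Jv_def .
qed

lemma khot_row_eq:
  assumes "r < length cs" "cs ! r = KHot J s t K"
  shows "constr_row d (cs ! r) c =
    col_sign c * (of_bool (c \<in> khot_cols J s t 1) - of_bool (c \<in> khot_cols J s t (-1)))"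
proof -
  have "finite J"
    using wf_KHot(1)[OF assms] finite_subset by blast
  have signs: "J = {j \<in> J. s j = 1} \<union> {j \<in> J. s j = -1}"
    using wf_KHot(2)[OF assms] by auto
  have "constr_row d (cs ! r) c = (\<Sum>j\<in>J. s j * term_coef d j (t j) c)"
    using assms(2) by simp
  also have "\<dots> = (\<Sum>j\<in>{j \<in> J. s j = 1}. s j * term_coef d j (t j) c) +
      (\<Sum>j\<in>{j \<in> J. s j = -1}. s j * term_coef d j (t j) c)"
    by (subst signs, rule sum.union_disjoint) (use \<open>finite J\<close> in auto)
  also have "\<dots> = (\<Sum>j\<in>{j \<in> J. s j = 1}. term_coef d j (t j) c) -
      (\<Sum>j\<in>{j \<in> J. s j = -1}. term_coef d j (t j) c)"
    by (simp add: sum_negf)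
  finally show ?thesis
    using khot_sign_class_sum[OF assms, where v = 1 and c = c]
      khot_sign_class_sum[OF assms, where v = "-1" and c = c]
    by (simp add: algebra_simps)
qed

text \<open>The two endpoints of a linkage constraint share the level at which the lower one hangs
  below the upper one, so the inherited parts cancel.\<close>
lemma link_row_eq:
  assumes "r < length cs" "cs ! r = Link j tj k tk"
  shows "constr_row d (cs ! r) c =
    col_sign c * (of_bool (c \<in> anc_cols j (term_start tj)) - of_bool (c \<in> anc_cols k (term_start tk)))"
proof -
  have edge: "link_edge cs r j k"
    using assms unfolding link_edge_def by blast
  then have "j \<noteq> k"
    using not_link_edge_loop by blast
  then have kinds: "link_kind r j = tj" "link_kind r k = tk"
    using assms(2) by (simp_all add: link_kind_def)
  have "anc_cols j (term_end tj) = anc_cols k (term_end tk)"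
    using link_edge_orientation[OF edge]
  proof
    assume "parent_edge j = r \<and> parent j = k \<and> root_dist j = Suc (root_dist k)"
    then show ?thesis
      using kinds anc_cols_attach_level[of j]
      unfolding attach_level_def inherited_cols_def attachment_def by simp
  next
    assume "parent_edge k = r \<and> parent k = j \<and> root_dist k = Suc (root_dist j)"
    then show ?thesis
      using kinds anc_cols_attach_level[of k]
      unfolding attach_level_def inherited_cols_def attachment_def by simp
  qed
  then show ?thesis
    using assms(2) term_coef_eq[of j tj c] term_coef_eq[of k tk c] link_edge_less[OF edge]
    by (simp add: algebra_simps)
qed

definition row_pos :: "nat \<Rightarrow> nat set" where
  "row_pos r = (case cs ! r of
      LowerBound j t L \<Rightarrow> anc_cols j (term_end t)
    | UpperBound j t U \<Rightarrow> anc_cols j (term_start t)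
    | KHot J s t K \<Rightarrow> khot_cols J s t 1
    | Link j tj k tk \<Rightarrow> anc_cols j (term_start tj))"

definition row_neg :: "nat \<Rightarrow> nat set" where
  "row_neg r = (case cs ! r of
      LowerBound j t L \<Rightarrow> anc_cols j (term_start t)
    | UpperBound j t U \<Rightarrow> anc_cols j (term_end t)
    | KHot J s t K \<Rightarrow> khot_cols J s t (-1)
    | Link j tj k tk \<Rightarrow> anc_cols k (term_start tk))"

lemma constr_row_eq:
  assumes "r < length cs"
  shows "constr_row d (cs ! r) c = col_sign c * (of_bool (c \<in> row_pos r) - of_bool (c \<in> row_neg r))"
proof -
  have "wf_constr d (cs ! r)"
    using wf assms by simp
  then show ?thesis
  proof (cases "cs ! r")
    case (LowerBound j t L)
    then show ?thesis
      using term_coef_eq[of j t c] \<open>wf_constr d (cs ! r)\<close>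
      by (simp add: row_pos_def row_neg_def algebra_simps)
  next
    case (UpperBound j t U)
    then show ?thesis
      using term_coef_eq[of j t c] \<open>wf_constr d (cs ! r)\<close>
      by (simp add: row_pos_def row_neg_def)
  next
    case (KHot J s t K)
    then show ?thesis
      using khot_row_eq[OF assms KHot] by (simp add: row_pos_def row_neg_def)
  next
    case (Link j tj k tk)
    then show ?thesis
      using link_row_eq[OF assms Link] by (simp add: row_pos_def row_neg_def)
  qed
qed

lemma khot_cols_mem_anc_family:
  assumes "r < length cs" "cs ! r = KHot J s t K"
  shows "khot_cols J s t v \<in> anc_family"
proof (cases "{j \<in> J. s j = v} = {}")
  case True
  then show ?thesis
    unfolding khot_cols_def anc_family_def by simp
next
  case False
  moreover have "finite {j \<in> J. s j = v}"
    using finite_subset[OF wf_KHot(1)[OF assms]] by simp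
  ultimately have "Max {j \<in> J. s j = v} < d"
    using Max_in wf_KHot(1)[OF assms] by blast
  then show ?thesis
    using False unfolding khot_cols_def anc_family_def Let_def by auto
qed

lemma row_sets_mem_anc_family:
  assumes "r < length cs"
  shows "row_pos r \<in> anc_family \<and> row_neg r \<in> anc_family"
proof -
  have "wf_constr d (cs ! r)"
    using wf assms by simp
  then show ?thesis
    using khot_cols_mem_anc_family[OF assms]
    by (cases "cs ! r") (auto simp: row_pos_def row_neg_def anc_family_def)
qed

end

theorem mainTheorem1:
  fixes d :: nat and cs :: "recourse_constr list"
  assumes "d \<ge> 1"
    and "\<forall>con\<in>set cs. wf_constr d con"
    and "assumption_A1 cs"
    and "assumption_A2 cs"
    and "assumption_A3 cs"
  shows "totally_unimodular (constraint_matrix d cs)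
       \<and> (\<forall>i<dim_row (constraint_matrix d cs). \<forall>c<dim_col (constraint_matrix d cs).
            constraint_matrix d cs $$ (i, c) \<in> {-1, 0, 1})
       \<and> (\<forall>I J. dim_row (submatrix (constraint_matrix d cs) I J)
                 = dim_col (submatrix (constraint_matrix d cs) I J) \<longrightarrow>
               det (submatrix (constraint_matrix d cs) I J) \<in> {-1, 0, 1})"
proof -
  interpret recourse_system cs d
    by unfold_locales (use assms in auto)
  have matrix:
    "constraint_matrix d cs = indicator_diff_mat (length cs) (2 * d) col_sign row_pos row_neg"
    by (rule eq_matI) (simp_all add: constraint_matrix_def indicator_diff_mat_def constr_row_eq)
  have "totally_unimodular (constraint_matrix d cs)"
    unfolding matrix
    using totally_unimodular_indicator_diff_mat[OF _ coherent_anc_family] col_sign_range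
      row_sets_mem_anc_family by blast
  moreover have "constraint_matrix d cs $$ (i, c) \<in> {-1, 0, 1}"
    if "i < dim_row (constraint_matrix d cs)" "c < dim_col (constraint_matrix d cs)" for i c
    using that indicator_diff_mat_entry_range[of col_sign c, OF col_sign_range]
    by (simp add: matrix indicator_diff_mat_def)
  ultimately show ?thesis
    unfolding totally_unimodular_def by blast
qed

end
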